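(* Let $\mathbb{A}$ be a reduced medial algebra of dimension at least $2$ over a field $\mathbb{K}$ of characteristic not $2,3$, and let $c_1,c_2$ be nonzero idempotents. Then $c_1c_2$ is a nonzero idempotent, and for all $\lambda_1,\lambda_2\in\mathbb{K}$, $$\mathbb{A}_{c_1}(\lambda_1)\mathbb{A}_{c_2}(\lambda_2)\subset\mathbb{A}_{c_1c_2}(\lambda_1\lambda_2),\qquad \mathbb{A}_{c_1}(\lambda_1)\mathbb{A}_{c_1}(\lambda_2)\subset\mathbb{A}_{c_1}(\lambda_1\lambda_2).$$ In particular $\sigma(c_1)\cup\sigma(c_2)\subset\sigma(c_1c_2)$, and $\dim\mathbb{A}_{c_j}(\lambda_j)\le\dim\mathbb{A}_{c_ic_j}(\lambda_j)$ for $\{i,j\}=\{1,2\}$ and all $\lambda_j\in\sigma(c_j)$.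
   Context: All algebras commutative, possibly nonassociative, finite-dimensional. Medial: $(xy)(zw)=(xz)(yw)$ identically. $L_c:x\mapsto cx$, $\mathbb{A}_c(\lambda)=\ker(L_c-\lambda\mathbf{1})$, and $\sigma(c)$ is the set of distinct eigenvalues of $L_c$. A medial algebra is reduced if $\ker L_c=0$ for every nonzero idempotent $c$. *)

theory Defs
  imports Complex_Main
begin

definition fd_comm_algebra ::
  "('k::field \<Rightarrow> 'v::ab_group_add \<Rightarrow> 'v) \<Rightarrow> ('v \<Rightarrow> 'v \<Rightarrow> 'v) \<Rightarrow> bool" where
  "fd_comm_algebra scale mult \<longleftrightarrow>
     vector_space scale \<and>
     (\<exists>B. finite_dimensional_vector_space scale B) \<and>
     (\<forall>x. Vector_Spaces.linear scale scale (mult x)) \<and>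
     (\<forall>y. Vector_Spaces.linear scale scale (\<lambda>x. mult x y)) \<and>
     (\<forall>x y. mult x y = mult y x)"

definition medial :: "('v \<Rightarrow> 'v \<Rightarrow> 'v) \<Rightarrow> bool" where
  "medial mult \<longleftrightarrow> (\<forall>x y z w. mult (mult x y) (mult z w) = mult (mult x z) (mult y w))"

definition idempotent_el :: "('v \<Rightarrow> 'v \<Rightarrow> 'v) \<Rightarrow> 'v \<Rightarrow> bool" where
  "idempotent_el mult c \<longleftrightarrow> mult c c = c"

definition reduced :: "('v \<Rightarrow> 'v \<Rightarrow> 'v) \<Rightarrow> ('v::zero) \<Rightarrow> bool" where
  "reduced mult z \<longleftrightarrow> (\<forall>c. c \<noteq> z \<and> idempotent_el mult c \<longrightarrow> (\<forall>x. mult c x = z \<longrightarrow> x = z))"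

definition eigsp ::
  "('k \<Rightarrow> 'v \<Rightarrow> 'v) \<Rightarrow> ('v \<Rightarrow> 'v \<Rightarrow> 'v) \<Rightarrow> 'v \<Rightarrow> 'k \<Rightarrow> 'v set" where
  "eigsp scale mult c l = {x. mult c x = scale l x}"

definition spec ::
  "('k \<Rightarrow> 'v \<Rightarrow> 'v) \<Rightarrow> ('v \<Rightarrow> 'v \<Rightarrow> 'v) \<Rightarrow> 'v::zero \<Rightarrow> 'k set" where
  "spec scale mult c = {l. \<exists>x. x \<noteq> 0 \<and> mult c x = scale l x}"

end

theory Submission
  imports Defs
begin

text \<open>Mediality gives \<open>(c\<^sub>1c\<^sub>2)(xy) = (c\<^sub>1x)(c\<^sub>2y)\<close>, so a product of eigenvectors of
  \<open>L\<^bsub>c\<^sub>1\<^esub>\<close> and \<open>L\<^bsub>c\<^sub>2\<^esub>\<close> is an eigenvector of \<open>L\<^bsub>c\<^sub>1c\<^sub>2\<^esub>\<close> for the product eigenvalue.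
  An idempotent \<open>d\<close> is an eigenvector of \<open>L\<^sub>d\<close> for the eigenvalue 1, so \<open>L\<^sub>d\<close> maps
  \<open>\<bbbA>\<^sub>c(\<lambda>)\<close> into \<open>\<bbbA>\<^bsub>dc\<^esub>(\<lambda>)\<close>; in a reduced algebra \<open>L\<^sub>d\<close> is injective for \<open>d \<noteq> 0\<close>,
  which yields the inclusion of spectra and the dimension inequalities.\<close>

locale medial_algebra = vector_space scale
  for scale :: "'k::field \<Rightarrow> 'v::ab_group_add \<Rightarrow> 'v" +
  fixes mult :: "'v \<Rightarrow> 'v \<Rightarrow> 'v"
  assumes linear_mult: "Vector_Spaces.linear scale scale (mult x)"
    and mult_commute: "mult x y = mult y x"
    and medial_law: "mult (mult x y) (mult z w) = mult (mult x z) (mult y w)"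
begin

lemma mult_scale_right: "mult x (scale a y) = scale a (mult x y)"
  using linear_mult unfolding Vector_Spaces.linear_def module_hom_def module_hom_axioms_def
  by blast

lemma mult_scale_left: "mult (scale a x) y = scale a (mult x y)"
  by (metis mult_commute mult_scale_right)

lemma idempotent_el_mult:
  assumes "idempotent_el mult c" "idempotent_el mult d"
  shows "idempotent_el mult (mult c d)"
  using assms medial_law[of c d c d] unfolding idempotent_el_def by simp

lemma eigsp_mult_eigsp:
  assumes "x \<in> eigsp scale mult c l" "y \<in> eigsp scale mult d m"
  shows "mult x y \<in> eigsp scale mult (mult c d) (l * m)"
proof -
  have "mult (mult c d) (mult x y) = mult (mult c x) (mult d y)"
    by (rule medial_law)
  also have "\<dots> = mult (scale l x) (scale m y)"
    using assms unfolding eigsp_def by simp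
  also have "\<dots> = scale (l * m) (mult x y)"
    by (simp add: mult_scale_left mult_scale_right)
  finally show ?thesis
    unfolding eigsp_def by simp
qed

lemma mult_idempotent_image_eigsp:
  assumes "idempotent_el mult d"
  shows "mult d ` eigsp scale mult c l \<subseteq> eigsp scale mult (mult d c) l"
proof
  fix z assume "z \<in> mult d ` eigsp scale mult c l"
  then obtain y where "y \<in> eigsp scale mult c l" and z: "z = mult d y"
    by blast
  moreover have "d \<in> eigsp scale mult d 1"
    using assms unfolding idempotent_el_def eigsp_def by simp
  ultimately show "z \<in> eigsp scale mult (mult d c) l"
    using eigsp_mult_eigsp by fastforce
qed

context
  assumes red: "reduced mult 0"
begin

lemma inj_mult_idempotent:
  assumes "d \<noteq> 0" "idempotent_el mult d"
  shows "inj (mult d)"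
  using module_hom.inj_iff_eq_0[of scale scale "mult d"] linear_mult red assms
  unfolding reduced_def linear_iff_module_hom by blast

lemma mult_idempotent_nonzero:
  assumes "c \<noteq> 0" "idempotent_el mult c" "d \<noteq> 0"
  shows "mult c d \<noteq> 0"
  using red assms unfolding reduced_def by blast

lemma spec_subset_spec_mult_idempotent:
  assumes "d \<noteq> 0" "idempotent_el mult d"
  shows "spec scale mult c \<subseteq> spec scale mult (mult d c)"
proof
  fix l assume "l \<in> spec scale mult c"
  then obtain x where "x \<noteq> 0" and x: "x \<in> eigsp scale mult c l"
    unfolding spec_def eigsp_def by blast
  then have "mult d x \<noteq> 0"
    using red assms unfolding reduced_def by blast
  moreover have "mult d x \<in> eigsp scale mult (mult d c) l"
    using mult_idempotent_image_eigsp[OF assms(2)] x by blast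
  ultimately show "l \<in> spec scale mult (mult d c)"
    unfolding spec_def eigsp_def by blast
qed

lemma dim_eigsp_le_dim_eigsp_mult_idempotent:
  assumes "finite_dimensional_vector_space scale B" "d \<noteq> 0" "idempotent_el mult d"
  shows "dim (eigsp scale mult c l) \<le> dim (eigsp scale mult (mult d c) l)"
proof -
  interpret finite_dimensional_vector_space_pair_1 scale B scale
    using assms(1) by (simp add: finite_dimensional_vector_space_pair_1_def vector_space_axioms)
  have "inj_on (mult d) (span (eigsp scale mult c l))"
    using inj_mult_idempotent[OF assms(2,3)] by (rule inj_on_subset) simp
  then have "dim (eigsp scale mult c l) = dim (mult d ` eigsp scale mult c l)"
    using dim_image_eq[OF linear_mult] by simp
  also have "\<dots> \<le> dim (eigsp scale mult (mult d c) l)"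
    by (rule vs1.dim_subset[OF mult_idempotent_image_eigsp[OF assms(3)]])
  finally show ?thesis .
qed

end

end

lemma fd_comm_algebra_medial_algebra:
  assumes "fd_comm_algebra scale mult" "medial mult"
  shows "medial_algebra scale mult"
  using assms unfolding fd_comm_algebra_def medial_def medial_algebra_def medial_algebra_axioms_def
  by blast

theorem proposition4p2:
  fixes scale :: "'k::field \<Rightarrow> 'v::ab_group_add \<Rightarrow> 'v"
    and mult :: "'v \<Rightarrow> 'v \<Rightarrow> 'v"
    and c1 c2 :: 'v
  assumes alg: "fd_comm_algebra scale mult"
    and med: "medial mult"
    and red: "reduced mult 0"
    and dim2: "vector_space.dim scale (UNIV :: 'v set) \<ge> 2"
    and char2: "(2::'k) \<noteq> 0" and char3: "(3::'k) \<noteq> 0"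
    and c1: "c1 \<noteq> 0" "idempotent_el mult c1"
    and c2: "c2 \<noteq> 0" "idempotent_el mult c2"
  shows "mult c1 c2 \<noteq> 0 \<and> idempotent_el mult (mult c1 c2)
    \<and> (\<forall>l1 l2. \<forall>x\<in>eigsp scale mult c1 l1. \<forall>y\<in>eigsp scale mult c2 l2.
          mult x y \<in> eigsp scale mult (mult c1 c2) (l1 * l2))
    \<and> (\<forall>l1 l2. \<forall>x\<in>eigsp scale mult c1 l1. \<forall>y\<in>eigsp scale mult c1 l2.
          mult x y \<in> eigsp scale mult c1 (l1 * l2))
    \<and> spec scale mult c1 \<union> spec scale mult c2 \<subseteq> spec scale mult (mult c1 c2)
    \<and> (\<forall>l\<in>spec scale mult c1.
          vector_space.dim scale (eigsp scale mult c1 l)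
            \<le> vector_space.dim scale (eigsp scale mult (mult c2 c1) l))
    \<and> (\<forall>l\<in>spec scale mult c2.
          vector_space.dim scale (eigsp scale mult c2 l)
            \<le> vector_space.dim scale (eigsp scale mult (mult c1 c2) l))"
proof -
  interpret medial_algebra scale mult
    using alg med by (rule fd_comm_algebra_medial_algebra)
  obtain B where B: "finite_dimensional_vector_space scale B"
    using alg unfolding fd_comm_algebra_def by blast
  have "mult c1 c1 = c1"
    using c1(2) unfolding idempotent_el_def .
  moreover have "spec scale mult c1 \<subseteq> spec scale mult (mult c1 c2)"
    using spec_subset_spec_mult_idempotent[OF red c2] by (simp add: mult_commute)
  ultimately show ?thesis
    using mult_idempotent_nonzero[OF red c1 c2(1)] idempotent_el_mult[OF c1(2) c2(2)]
      eigsp_mult_eigsp[of _ c1 _ _ c2] eigsp_mult_eigsp[of _ c1 _ _ c1]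
      spec_subset_spec_mult_idempotent[OF red c1]
      dim_eigsp_le_dim_eigsp_mult_idempotent[OF red B c2]
      dim_eigsp_le_dim_eigsp_mult_idempotent[OF red B c1]
    by auto
qed

end
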